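(* Let $m\ge3$, $\mu\ge0$, $c\in\mathbb{R}^m_{\ge0}$, demands $d=(d_L,d_R)$ with $d_L\in\Delta^L$, $d_R\in\Delta^R$, and $C:=2(\|c\|_\infty+33\mu\log m)$, and assume $C>0$. Let $\Delta\ge0$ and let $x\in\Delta^m$ satisfy $$F(x)\le\min_{x'\in\Delta^m}F(x')+\frac{\Delta}{4C},\qquad F(x):=\frac1{4C}\langle c,x\rangle+\frac{\mu}{4C}H(x)+\frac14\|\mathbf{B}^\top x-d\|_1.$$ Let $\tilde x\in\Delta^m$ satisfy $\mathbf{B}^\top\tilde x=d$ and $\|\tilde x-x\|_1\le2\|\mathbf{B}^\top x-d\|_1$ (e.g. the output of the $\mathsf{OTRound}$ procedure of Altschuler–Weed–Rigollet applied to $x$). Then $$\langle c,\tilde x\rangle+\mu H(\tilde x)\le\mathrm{OPT}_\mu(d)+\Delta+\mu m^{-30}.$$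
   Context: $L,R$ are finite nonempty sets, $m=|L||R|$, and coordinates of $\mathbb{R}^m$ are indexed by pairs $(i,j)\in L\times R$. $\mathbf{B}\in\{0,1\}^{m\times(|L|+|R|)}$ is the unsigned edge-vertex incidence matrix of the complete bipartite graph on $L\cup R$: $\mathbf{B}_{(i,j),v}=1$ iff $v\in\{i,j\}$. $H(x)=\sum_i x_i\log x_i$ ($0\log0=0$, natural log). $\mathrm{OPT}_\mu(d)=\min_{x\in\Delta^m,\ \mathbf{B}^\top x=d}\ \langle c,x\rangle+\mu H(x)$. $\Delta^k$ denotes the probability simplex. *)

theory Defs
  imports Complex_Main
begin

text \<open>Coordinates of R^m are pairs (i,j) in L x R; a vector is a function on pairs,
  only its values on L x R matter.  L and R live in distinct types, so the vertex set
  of the complete bipartite graph is the disjoint union of L and R.\<close>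

definition simplex :: "'a set \<Rightarrow> ('a \<Rightarrow> real) \<Rightarrow> bool" where
  "simplex S x \<longleftrightarrow> (\<forall>p\<in>S. 0 \<le> x p) \<and> sum x S = 1"

definition xlogx :: "real \<Rightarrow> real" where
  "xlogx t = (if t = 0 then 0 else t * ln t)"

definition entropy :: "'a set \<Rightarrow> ('a \<Rightarrow> real) \<Rightarrow> real" where
  "entropy S x = (\<Sum>p\<in>S. xlogx (x p))"

definition inner_on :: "'a set \<Rightarrow> ('a \<Rightarrow> real) \<Rightarrow> ('a \<Rightarrow> real) \<Rightarrow> real" where
  "inner_on S c x = (\<Sum>p\<in>S. c p * x p)"

definition linf_on :: "'a set \<Rightarrow> ('a \<Rightarrow> real) \<Rightarrow> real" where
  "linf_on S c = Max ((\<lambda>p. \<bar>c p\<bar>) ` S)"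

definition l1_on :: "'a set \<Rightarrow> ('a \<Rightarrow> real) \<Rightarrow> real" where
  "l1_on S x = (\<Sum>p\<in>S. \<bar>x p\<bar>)"

text \<open>B^T x: row sums (vertices in L) and column sums (vertices in R).\<close>
definition rowsum :: "'b set \<Rightarrow> ('a \<times> 'b \<Rightarrow> real) \<Rightarrow> 'a \<Rightarrow> real" where
  "rowsum R x i = (\<Sum>j\<in>R. x (i, j))"

definition colsum :: "'a set \<Rightarrow> ('a \<times> 'b \<Rightarrow> real) \<Rightarrow> 'b \<Rightarrow> real" where
  "colsum L x j = (\<Sum>i\<in>L. x (i, j))"

definition marg_err :: "'a set \<Rightarrow> 'b set \<Rightarrow> ('a \<times> 'b \<Rightarrow> real) \<Rightarrow> ('a \<Rightarrow> real) \<Rightarrow> ('b \<Rightarrow> real) \<Rightarrow> real" where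
  "marg_err L R x dL dR =
     (\<Sum>i\<in>L. \<bar>rowsum R x i - dL i\<bar>) + (\<Sum>j\<in>R. \<bar>colsum L x j - dR j\<bar>)"

definition marg_eq :: "'a set \<Rightarrow> 'b set \<Rightarrow> ('a \<times> 'b \<Rightarrow> real) \<Rightarrow> ('a \<Rightarrow> real) \<Rightarrow> ('b \<Rightarrow> real) \<Rightarrow> bool" where
  "marg_eq L R x dL dR \<longleftrightarrow> (\<forall>i\<in>L. rowsum R x i = dL i) \<and> (\<forall>j\<in>R. colsum L x j = dR j)"

definition OPT :: "'a set \<Rightarrow> 'b set \<Rightarrow> ('a \<times> 'b \<Rightarrow> real) \<Rightarrow> real \<Rightarrow> ('a \<Rightarrow> real) \<Rightarrow> ('b \<Rightarrow> real) \<Rightarrow> real" where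
  "OPT L R c \<mu> dL dR = Inf {inner_on (L \<times> R) c x + \<mu> * entropy (L \<times> R) x | x.
      simplex (L \<times> R) x \<and> marg_eq L R x dL dR}"

definition Fobj :: "'a set \<Rightarrow> 'b set \<Rightarrow> ('a \<times> 'b \<Rightarrow> real) \<Rightarrow> real \<Rightarrow> real \<Rightarrow> ('a \<Rightarrow> real) \<Rightarrow> ('b \<Rightarrow> real) \<Rightarrow> ('a \<times> 'b \<Rightarrow> real) \<Rightarrow> real" where
  "Fobj L R c \<mu> C dL dR x = inner_on (L \<times> R) c x / (4 * C) + \<mu> / (4 * C) * entropy (L \<times> R) x
      + marg_err L R x dL dR / 4"

end

theory Submission imports Defs begin

text \<open>Write \<open>G = \<langle>c,\<cdot>\<rangle> + \<mu> H\<close>. On the simplex, \<open>t log t\<close> is Lipschitz with constant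
  \<open>K = 33 log m\<close> up to an additive error \<open>e\<^sup>-\<^sup>K\<^sup>-\<^sup>1 \<le> m\<^sup>-\<^sup>3\<^sup>3\<close> per coordinate, so
  \<open>G(x\<^sub>t) - G(x) \<le> (C/2) \<parallel>x\<^sub>t - x\<parallel>\<^sub>1 + \<mu> m\<^sup>-\<^sup>3\<^sup>0 \<le> C \<parallel>B\<^sup>T x - d\<parallel>\<^sub>1 + \<mu> m\<^sup>-\<^sup>3\<^sup>0\<close>.
  Comparing the near-minimality of \<open>x\<close> for \<open>4C F\<close> with any feasible \<open>y\<close>, whose marginal
  error vanishes, gives \<open>G(x) + C \<parallel>B\<^sup>T x - d\<parallel>\<^sub>1 \<le> G(y) + \<Delta>\<close>, and the two bounds combine.\<close>

definition reg_cost :: "'a set \<Rightarrow> ('a \<Rightarrow> real) \<Rightarrow> real \<Rightarrow> ('a \<Rightarrow> real) \<Rightarrow> real" where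
  "reg_cost S c \<mu> x = inner_on S c x + \<mu> * entropy S x"

lemma xlogx_eq: "xlogx t = t * ln t"
  by (simp add: xlogx_def)

lemma xlogx_plus_linear_ge:
  assumes "(t::real) \<ge> 0"
  shows "t * ln t + K * t \<ge> - exp (-K-1)"
proof (cases "t = 0")
  case False
  hence t: "t > 0" using assms by simp
  define t0 where "t0 = exp (-K-1)"
  have "ln t0 - ln t \<le> t0 / t - 1"
    using ln_le_minus_one[of "t0/t"] t by (simp add: t0_def ln_div)
  hence "t * (-K - 1 - ln t) \<le> t * (t0 / t - 1)"
    using t by (simp add: t0_def mult_left_mono)
  thus ?thesis using t by (simp add: t0_def algebra_simps)
qed simp

lemma xlogx_ge_minus_one: "0 \<le> t \<Longrightarrow> xlogx t \<ge> -1"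
  using xlogx_plus_linear_ge[of t 0] by (simp add: xlogx_eq) (smt (verit) exp_le_one_iff)

text \<open>Where \<open>t log t\<close> decreases it may do so steeply near \<open>0\<close>; the slope is at least
  \<open>-K\<close> once \<open>t \<ge> e\<^sup>-\<^sup>K\<close>, and below that threshold the loss is at most \<open>e\<^sup>-\<^sup>K\<^sup>-\<^sup>1\<close>.\<close>

lemma xlogx_drop_le:
  assumes "0 \<le> (a::real)" "a \<le> b"
  shows "a * ln a - b * ln b \<le> K * (b - a) + exp (-K-1)"
proof (cases "a \<le> exp (-K)")
  case True
  have "a * ln a + K * a \<le> 0"
  proof (cases "a = 0")
    case False
    hence a: "a > 0" using assms by linarith
    have "ln a \<le> -K" using True a by (metis ln_exp ln_le_cancel_iff exp_gt_zero)
    thus ?thesis using a mult_left_mono[of "ln a" "-K" a] by (simp add: algebra_simps)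
  qed simp
  moreover have "b * ln b + K * b \<ge> - exp (-K-1)"
    using xlogx_plus_linear_ge assms by force
  ultimately show ?thesis by (simp add: algebra_simps)
next
  case False
  hence a: "a > 0" by (smt (verit) exp_gt_zero)
  have "ln a > -K" using False a by (metis exp_ln linorder_not_le exp_less_cancel_iff)
  moreover have "ln a \<le> ln b" using a assms by simp
  ultimately have "(b - a) * ln b \<ge> (b - a) * (-K)" using assms by (intro mult_left_mono) auto
  moreover have "a * (ln b - ln a) \<ge> 0" using a \<open>ln a \<le> ln b\<close> by simp
  moreover have "b * ln b - a * ln a = (b - a) * ln b + a * (ln b - ln a)"
    by (simp add: algebra_simps)
  moreover have "exp (-K-1) > 0" by simp
  ultimately show ?thesis by (simp add: algebra_simps) (smt (verit) exp_gt_zero)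
qed

lemma xlogx_rise_le:
  assumes "0 \<le> (a::real)" "a \<le> b" "b \<le> 1" "K \<ge> 1"
  shows "b * ln b - a * ln a \<le> K * (b - a)"
proof (cases "a = 0")
  case True
  have "b * ln b \<le> 0"
    using assms by (cases "b = 0") (auto intro: mult_nonneg_nonpos)
  moreover have "K * b \<ge> 0" using assms by simp
  ultimately show ?thesis using True by simp
next
  case False
  hence a: "a > 0" using assms by simp
  hence b: "b > 0" using assms by simp
  have "(b - a) * ln b \<le> 0" using assms b by (simp add: mult_nonneg_nonpos)
  moreover have "ln b - ln a \<le> b / a - 1"
    using ln_le_minus_one[of "b/a"] a b by (simp add: ln_div)
  hence "a * (ln b - ln a) \<le> b - a"
    using a mult_left_mono[of _ _ a] by (fastforce simp: algebra_simps)
  moreover have "b - a \<le> K * (b - a)" using assms by (simp add: mult_le_cancel_right1)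
  moreover have "b * ln b - a * ln a = (b - a) * ln b + a * (ln b - ln a)"
    by (simp add: algebra_simps)
  ultimately show ?thesis by linarith
qed

lemma xlogx_diff_le:
  assumes "0 \<le> (a::real)" "a \<le> 1" "0 \<le> b" "b \<le> 1" "K \<ge> 1"
  shows "xlogx a - xlogx b \<le> K * \<bar>a - b\<bar> + exp (-K-1)"
proof (cases "a \<le> b")
  case True
  then show ?thesis using xlogx_drop_le[of a b K] assms by (simp add: xlogx_eq abs_if)
next
  case False
  then show ?thesis using xlogx_rise_le[of b a K] assms
    by (simp add: xlogx_eq abs_if) (smt (verit) exp_gt_zero)
qed

lemma simplex_bounds:
  assumes "finite S" "simplex S y" "p \<in> S"
  shows "0 \<le> y p" "y p \<le> 1"
proof -
  have nonneg: "\<forall>q\<in>S. 0 \<le> y q" and "sum y S = 1" using assms(2) by (auto simp: simplex_def)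
  then show "0 \<le> y p" "y p \<le> 1"
    using member_le_sum[of p S y] assms(1,3) by auto
qed

lemma entropy_ge_neg_card:
  assumes "finite S" "simplex S y"
  shows "entropy S y \<ge> - real (card S)"
proof -
  have "entropy S y \<ge> (\<Sum>p\<in>S. -1)"
    unfolding entropy_def using simplex_bounds[OF assms] by (intro sum_mono xlogx_ge_minus_one)
  thus ?thesis by simp
qed

lemma entropy_diff_le:
  assumes "finite S" "simplex S x" "simplex S y" "K \<ge> 1"
  shows "entropy S y - entropy S x
           \<le> K * l1_on S (\<lambda>p. y p - x p) + real (card S) * exp (-K-1)"
proof -
  have "entropy S y - entropy S x = (\<Sum>p\<in>S. xlogx (y p) - xlogx (x p))"
    by (simp add: entropy_def sum_subtractf)
  also have "\<dots> \<le> (\<Sum>p\<in>S. K * \<bar>y p - x p\<bar> + exp (-K-1))"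
    using simplex_bounds[OF assms(1,2)] simplex_bounds[OF assms(1,3)] assms(4)
    by (intro sum_mono xlogx_diff_le) auto
  also have "\<dots> = K * l1_on S (\<lambda>p. y p - x p) + real (card S) * exp (-K-1)"
    by (simp add: sum.distrib sum_distrib_left l1_on_def)
  finally show ?thesis .
qed

lemma inner_on_diff_le:
  assumes "finite S"
  shows "inner_on S c y - inner_on S c x \<le> linf_on S c * l1_on S (\<lambda>p. y p - x p)"
proof -
  have "inner_on S c y - inner_on S c x = (\<Sum>p\<in>S. c p * (y p - x p))"
    by (simp add: inner_on_def sum_subtractf algebra_simps)
  also have "\<dots> \<le> (\<Sum>p\<in>S. linf_on S c * \<bar>y p - x p\<bar>)"
  proof (rule sum_mono)
    fix p assume "p \<in> S"
    hence "\<bar>c p\<bar> \<le> linf_on S c"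
      unfolding linf_on_def using assms by (intro Max_ge) auto
    hence "\<bar>c p\<bar> * \<bar>y p - x p\<bar> \<le> linf_on S c * \<bar>y p - x p\<bar>"
      by (simp add: mult_right_mono)
    moreover have "c p * (y p - x p) \<le> \<bar>c p\<bar> * \<bar>y p - x p\<bar>"
      by (metis abs_ge_self abs_mult)
    ultimately show "c p * (y p - x p) \<le> linf_on S c * \<bar>y p - x p\<bar>" by linarith
  qed
  also have "\<dots> = linf_on S c * l1_on S (\<lambda>p. y p - x p)"
    by (simp add: l1_on_def sum_distrib_left)
  finally show ?thesis .
qed

lemma card_mul_exp_le_powr:
  assumes "real m \<ge> 3"
  shows "real m * exp (- (33 * ln (real m)) - 1) \<le> real m powr (-30)"
proof -
  have "exp (- (33 * ln (real m)) - 1) \<le> real m powr (-33)"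
    using assms by (simp add: powr_def)
  hence "real m * exp (- (33 * ln (real m)) - 1) \<le> real m powr 1 * real m powr (-33)"
    using assms by (simp add: mult_left_mono)
  also have "\<dots> = real m powr (-32)" using powr_add[of "real m" 1 "-33"] by simp
  also have "\<dots> \<le> real m powr (-30)" using assms by (intro powr_mono) auto
  finally show ?thesis .
qed

lemma reg_cost_diff_le:
  assumes "finite S" "card S = m" "m \<ge> 3" "\<mu> \<ge> 0" "simplex S x" "simplex S y"
  shows "reg_cost S c \<mu> y - reg_cost S c \<mu> x
           \<le> (linf_on S c + 33 * \<mu> * ln (real m)) * l1_on S (\<lambda>p. y p - x p)
              + \<mu> * real m powr (-30)"
proof -
  define K where "K = 33 * ln (real m)"
  have "1 \<le> ln (3::real)"
    using exp_le ln_le_cancel_iff[of "exp 1" 3] by simp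
  also have "\<dots> \<le> ln (real m)"
    using assms(3) by simp
  finally have "ln (real m) \<ge> 1" .
  hence "K \<ge> 1" by (simp add: K_def)
  have "entropy S y - entropy S x \<le> K * l1_on S (\<lambda>p. y p - x p) + real m powr (-30)"
    using entropy_diff_le[OF assms(1,5,6) \<open>K \<ge> 1\<close>] card_mul_exp_le_powr[of m] assms(2,3)
    by (simp add: K_def)
  hence "\<mu> * (entropy S y - entropy S x) \<le> \<mu> * (K * l1_on S (\<lambda>p. y p - x p) + real m powr (-30))"
    using assms(4) by (rule mult_left_mono)
  with inner_on_diff_le[OF assms(1), of c y x] show ?thesis
    by (simp add: reg_cost_def K_def algebra_simps)
qed

lemma Fobj_bdd_below:
  assumes "finite L" "finite R" "\<mu> \<ge> 0" "C > 0" "\<forall>p\<in>L \<times> R. c p \<ge> 0"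
  shows "bdd_below {Fobj L R c \<mu> C dL dR y | y. simplex (L \<times> R) y}"
proof (rule bdd_belowI)
  fix z assume "z \<in> {Fobj L R c \<mu> C dL dR y | y. simplex (L \<times> R) y}"
  then obtain y where z: "z = Fobj L R c \<mu> C dL dR y" and y: "simplex (L \<times> R) y" by auto
  have fin: "finite (L \<times> R)" using assms(1,2) by simp
  have "inner_on (L \<times> R) c y \<ge> 0"
    unfolding inner_on_def using assms(5) simplex_bounds[OF fin y] by (intro sum_nonneg) auto
  hence "inner_on (L \<times> R) c y / (4*C) \<ge> 0" using assms(4) by simp
  moreover have "\<mu> / (4*C) * entropy (L \<times> R) y \<ge> \<mu> / (4*C) * - real (card (L \<times> R))"
    using entropy_ge_neg_card[OF fin y] assms(3,4) by (intro mult_left_mono) auto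
  moreover have "marg_err L R y dL dR \<ge> 0" by (simp add: marg_err_def sum_nonneg)
  ultimately show "\<mu> / (4*C) * - real (card (L \<times> R)) \<le> z"
    using assms(4) by (simp add: z Fobj_def)
qed

lemma near_min_Fobj_le_feasible:
  assumes "finite L" "finite R" "\<mu> \<ge> 0" "C > 0" "\<forall>p\<in>L \<times> R. c p \<ge> 0"
    and "Fobj L R c \<mu> C dL dR x
           \<le> Inf {Fobj L R c \<mu> C dL dR x' | x'. simplex (L \<times> R) x'} + \<Delta> / (4 * C)"
    and "simplex (L \<times> R) y" "marg_eq L R y dL dR"
  shows "reg_cost (L \<times> R) c \<mu> x + C * marg_err L R x dL dR \<le> reg_cost (L \<times> R) c \<mu> y + \<Delta>"
proof -
  have "Fobj L R c \<mu> C dL dR y \<in> {Fobj L R c \<mu> C dL dR x' | x'. simplex (L \<times> R) x'}"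
    using assms(7) by blast
  hence "Inf {Fobj L R c \<mu> C dL dR x' | x'. simplex (L \<times> R) x'} \<le> Fobj L R c \<mu> C dL dR y"
    using Fobj_bdd_below[OF assms(1-5)] by (rule cInf_lower)
  hence "Fobj L R c \<mu> C dL dR x \<le> Fobj L R c \<mu> C dL dR y + \<Delta> / (4*C)"
    using assms(6) by linarith
  moreover have "marg_err L R y dL dR = 0"
    using assms(8) by (simp add: marg_err_def marg_eq_def)
  ultimately have "(reg_cost (L \<times> R) c \<mu> x + C * marg_err L R x dL dR) / (4*C)
                     \<le> (reg_cost (L \<times> R) c \<mu> y + \<Delta>) / (4*C)"
    using assms(4) by (simp add: Fobj_def reg_cost_def field_simps)
  thus ?thesis using assms(4) by (simp add: divide_le_cancel)
qed

theorem mainTheorem13: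
  fixes L :: "'a set" and R :: "'b set"
    and c x xt :: "'a \<times> 'b \<Rightarrow> real"
    and dL :: "'a \<Rightarrow> real" and dR :: "'b \<Rightarrow> real"
    and \<mu> C \<Delta> :: real and m :: nat
  assumes "finite L" "L \<noteq> {}" "finite R" "R \<noteq> {}"
    and "m = card L * card R" "m \<ge> 3"
    and "\<mu> \<ge> 0"
    and "\<forall>p\<in>L \<times> R. c p \<ge> 0"
    and "simplex L dL" "simplex R dR"
    and "C = 2 * (linf_on (L \<times> R) c + 33 * \<mu> * ln (real m))" "C > 0"
    and "\<Delta> \<ge> 0"
    and "simplex (L \<times> R) x"
    and "Fobj L R c \<mu> C dL dR x
           \<le> Inf {Fobj L R c \<mu> C dL dR x' | x'. simplex (L \<times> R) x'} + \<Delta> / (4 * C)"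
    and "simplex (L \<times> R) xt" "marg_eq L R xt dL dR"
    and "l1_on (L \<times> R) (\<lambda>p. xt p - x p) \<le> 2 * marg_err L R x dL dR"
  shows "inner_on (L \<times> R) c xt + \<mu> * entropy (L \<times> R) xt
           \<le> OPT L R c \<mu> dL dR + \<Delta> + \<mu> * real m powr (-30)"
proof -
  let ?G = "reg_cost (L \<times> R) c \<mu>" and ?e = "marg_err L R x dL dR"
  have card: "card (L \<times> R) = m" using assms(5) by (simp add: card_cartesian_product)
  have half_C: "linf_on (L \<times> R) c + 33 * \<mu> * ln (real m) = C/2" using assms(11) by simp
  have "?G xt - ?G x \<le> (C/2) * l1_on (L \<times> R) (\<lambda>p. xt p - x p) + \<mu> * real m powr (-30)"
    using reg_cost_diff_le[where c = c, OF _ card assms(6,7,14,16), unfolded half_C] assms(1,3) by simp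
  also have "\<dots> \<le> C * ?e + \<mu> * real m powr (-30)"
    using assms(12,18) by simp
  finally have rounding: "?G xt \<le> ?G x + C * ?e + \<mu> * real m powr (-30)" by simp
  have "?G xt - \<Delta> - \<mu> * real m powr (-30) \<le> OPT L R c \<mu> dL dR"
    unfolding OPT_def
  proof (rule cInf_greatest)
    fix z assume "z \<in> {inner_on (L \<times> R) c y + \<mu> * entropy (L \<times> R) y | y.
                         simplex (L \<times> R) y \<and> marg_eq L R y dL dR}"
    then obtain y where "z = ?G y" and y: "simplex (L \<times> R) y" "marg_eq L R y dL dR"
      by (auto simp: reg_cost_def)
    moreover have "?G x + C * ?e \<le> ?G y + \<Delta>"
      using near_min_Fobj_le_feasible[OF assms(1,3,7,12,8,15) y] .
    ultimately show "?G xt - \<Delta> - \<mu> * real m powr (-30) \<le> z" using rounding by linarith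
  qed (use assms(16,17) in blast)
  thus ?thesis by (simp add: reg_cost_def)
qed

end
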